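(* There are opinion poll instances on $2(n+1)$ agents on which the AVD mechanism, for every choice of default node, has expected additive approximation $\Omega(\sqrt{n\ln n})$.
   Context: A nomination profile on a finite agent set $N$ is a directed graph $\mathbf{x}$ on $N$ without self-loops. For $S\subseteq N$, $d_j(S,\mathbf{x})=|\{i\in S:(i,j)\text{ is an edge}\}|$; $d_j(\mathbf{x})=d_j(N\setminus\{j\},\mathbf{x})$ and $\Delta(\mathbf{x})=\max_j d_j(\mathbf{x})$. Opinion poll model: the random profile is drawn from a product distribution $\prod_{i\in N}\mathbf{P}_i$, where $\mathbf{P}_i$ is an arbitrary distribution over sets of outgoing edges of $i$ (to nodes other than $i$), independent across agents $i$. AVD with default node $t$: a non-default node $k$ beats a non-default node $j$ if $d_k(N\setminus\{j,k,t\},\mathbf{x})>d_j(N\setminus\{j,k,t\},\mathbf{x})$; a non-default $k$ beats $t$ if $d_k(N\setminus\{k,t\},\mathbf{x})>d_t(N\setminus\{k,t\},\mathbf{x})$, and $t$ beats $k$ if $d_k(N\setminus\{k,t\},\mathbf{x})<d_t(N\setminus\{k,t\},\mathbf{x})$. AVD returns the node that beats every other node if it exists, otherwise $t$. The expected additive approximation is $\mathbb{E}[\Delta(\mathbf{x})-d_w(\mathbf{x})]$ where $w$ is the winner. *)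

theory Defs
  imports "HOL-Probability.Probability"
begin

text \<open>A nomination profile on agent set N is represented by x :: nat => nat set,
  where x i is the set of out-neighbours of agent i.\<close>

definition valid_profile :: "nat set \<Rightarrow> (nat \<Rightarrow> nat set) \<Rightarrow> bool" where
  "valid_profile N x \<longleftrightarrow> (\<forall>i\<in>N. x i \<subseteq> N - {i})"

definition indeg :: "nat set \<Rightarrow> (nat \<Rightarrow> nat set) \<Rightarrow> nat \<Rightarrow> nat" where
  "indeg S x j = card {i \<in> S. j \<in> x i}"

definition deg :: "nat set \<Rightarrow> (nat \<Rightarrow> nat set) \<Rightarrow> nat \<Rightarrow> nat" where
  "deg N x j = indeg (N - {j}) x j"

definition maxdeg :: "nat set \<Rightarrow> (nat \<Rightarrow> nat set) \<Rightarrow> nat" where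
  "maxdeg N x = Max ((deg N x) ` N)"

definition avd_beats :: "nat set \<Rightarrow> nat \<Rightarrow> (nat \<Rightarrow> nat set) \<Rightarrow> nat \<Rightarrow> nat \<Rightarrow> bool" where
  "avd_beats N t x a b =
     (if a \<noteq> t \<and> b \<noteq> t then indeg (N - {a, b, t}) x a > indeg (N - {a, b, t}) x b
      else if b = t then indeg (N - {a, t}) x a > indeg (N - {a, t}) x t
      else indeg (N - {b, t}) x b < indeg (N - {b, t}) x t)"

definition avd :: "nat set \<Rightarrow> nat \<Rightarrow> (nat \<Rightarrow> nat set) \<Rightarrow> nat" where
  "avd N t x =
     (if \<exists>k\<in>N. \<forall>j\<in>N - {k}. avd_beats N t x k j
      then (THE k. k \<in> N \<and> (\<forall>j\<in>N - {k}. avd_beats N t x k j))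
      else t)"

definition opinion_poll :: "nat set \<Rightarrow> (nat \<Rightarrow> nat set pmf) \<Rightarrow> bool" where
  "opinion_poll N P \<longleftrightarrow> (\<forall>i\<in>N. set_pmf (P i) \<subseteq> Pow (N - {i}))"

definition profile_pmf :: "nat set \<Rightarrow> (nat \<Rightarrow> nat set pmf) \<Rightarrow> (nat \<Rightarrow> nat set) pmf" where
  "profile_pmf N P = Pi_pmf N {} P"

definition avd_additive_approx :: "nat set \<Rightarrow> nat \<Rightarrow> (nat \<Rightarrow> nat set pmf) \<Rightarrow> real" where
  "avd_additive_approx N t P =
     measure_pmf.expectation (profile_pmf N P)
       (\<lambda>x. real (maxdeg N x) - real (deg N x (avd N t x)))"

end

theory Submission
  imports Defs
begin

text \<open>Agents come in clone pairs \<open>a\<close> and \<open>a + h\<close>: both receive exactly the same nominations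
  apart from each other's, so neither beats the other and AVD always returns its default \<open>t\<close>.
  The remaining structure makes some agent far more popular than \<open>t\<close>. Agents carry the code
  \<open>a mod h < 2 ^ m\<close>; the voters form \<open>m\<close> blocks of \<open>K\<close>, and a voter of block \<open>j\<close> tosses a fair
  coin and nominates every agent whose code has bit \<open>j\<close> equal to the coin. The agent whose code
  follows the majority of every block has in-degree about \<open>\<Sum>j. max A\<^sub>j (K - A\<^sub>j)\<close>, while \<open>t\<close>
  only collects one fixed side of every block, which is \<open>K / 2\<close> in expectation. Each block thus
  contributes half the mean absolute deviation of a fair binomial, which is of order \<open>\<surd>K\<close>;
  with \<open>m \<approx> log n\<close> and \<open>K \<approx> n / m\<close> this totals \<open>\<surd>(n log n)\<close>.\<close>

lemma expectation_binomial_half_Suc: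
  fixes g :: "nat \<Rightarrow> real"
  shows "measure_pmf.expectation (binomial_pmf (Suc K) (1/2)) g =
     (measure_pmf.expectation (binomial_pmf K (1/2)) (\<lambda>k. g (Suc k)) +
      measure_pmf.expectation (binomial_pmf K (1/2)) g) / 2"
proof -
  have "binomial_pmf (Suc K) (1/2) = bind_pmf (bernoulli_pmf (1/2))
          (\<lambda>b. map_pmf (\<lambda>k. (if b then 1 else 0) + k) (binomial_pmf K (1/2)))"
    by (subst binomial_pmf_Suc) (auto simp: map_pmf_def)
  then show ?thesis
    by (simp add: pmf_expectation_bind[where A=UNIV] UNIV_bool)
qed

lemma expectation_binomial_half_centered:
  "measure_pmf.expectation (binomial_pmf K (1/2)) (\<lambda>k. 2 * real k - real K) = 0"
proof (induction K)
  case 0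
  then show ?case by (simp add: binomial_pmf_0)
next
  case (Suc K)
  then show ?case
    by (simp add: expectation_binomial_half_Suc algebra_simps Bochner_Integration.integral_add
        Bochner_Integration.integral_diff)
qed

definition binomial_abs_dev :: "nat \<Rightarrow> real" where
  "binomial_abs_dev K = measure_pmf.expectation (binomial_pmf K (1/2)) (\<lambda>k. \<bar>2 * real k - real K\<bar>)"

lemma binomial_abs_dev_Suc:
  "binomial_abs_dev (Suc K) = binomial_abs_dev K + measure_pmf.prob (binomial_pmf K (1/2)) {k. 2 * k = K}"
proof -
  \<comment> \<open>One more coin moves \<open>|2k - K|\<close> up or down by one with equal chance, except at a tie.\<close>
  have step: "(\<bar>y + 1\<bar> + \<bar>y - 1\<bar>) / 2 = \<bar>y\<bar> + of_bool (y = 0)" if "y \<in> \<int>" for y :: real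
    using that by (elim Ints_cases) (auto simp: abs_if)
  have "binomial_abs_dev (Suc K) = measure_pmf.expectation (binomial_pmf K (1/2))
      (\<lambda>k. (\<bar>(2 * real k - real K) + 1\<bar> + \<bar>(2 * real k - real K) - 1\<bar>) / 2)"
    unfolding binomial_abs_dev_def by (simp add: expectation_binomial_half_Suc algebra_simps)
  also have "\<dots> = measure_pmf.expectation (binomial_pmf K (1/2))
      (\<lambda>k. \<bar>2 * real k - real K\<bar> + indicator {k. 2 * k = K} k)"
    by (intro Bochner_Integration.integral_cong refl, subst step) (auto simp: indicator_def)
  finally show ?thesis
    unfolding binomial_abs_dev_def by (simp add: Bochner_Integration.integral_add)
qed

lemma binomial_abs_dev_even_ge:
  "binomial_abs_dev (2 * M) \<ge> (\<Sum>L<M. pmf (binomial_pmf (2 * L) (1/2)) L)"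
proof (induction M)
  case 0
  then show ?case by (simp add: binomial_abs_dev_def binomial_pmf_0)
next
  case (Suc M)
  have "measure_pmf.prob (binomial_pmf (2 * M) (1/2)) {k. 2 * k = 2 * M} = pmf (binomial_pmf (2 * M) (1/2)) M"
    by (simp add: measure_pmf_single)
  moreover have "binomial_abs_dev (2 * M + 1) \<le> binomial_abs_dev (2 * M + 2)"
    using binomial_abs_dev_Suc[of "2 * M + 1"] by simp
  ultimately show ?case
    using Suc binomial_abs_dev_Suc[of "2 * M"] by simp
qed

lemma central_binomial_Suc:
  "Suc L * (2 * Suc L choose Suc L) = 2 * (2 * L + 1) * (2 * L choose L)"
proof -
  have "Suc L * (2 * Suc L choose Suc L) = 2 * Suc L * (Suc (2 * L) choose L)"
    using Suc_times_binomial[of L "Suc (2 * L)"] by simp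
  moreover have "Suc L * (Suc (2 * L) choose L) = Suc (2 * L) * (2 * L choose L)"
    using Suc_times_binomial[of L "2 * L"] binomial_symmetric[of "Suc L" "Suc (2 * L)"] by simp
  ultimately show ?thesis
    by (metis mult.assoc Suc_eq_plus1)
qed

lemma central_binomial_sq_lower: "16 ^ L \<le> (4 * L + 1) * (2 * L choose L)\<^sup>2"
proof (induction L)
  case 0
  then show ?case by simp
next
  case (Suc L)
  define C where "C = 2 * L choose L"
  define C' where "C' = 2 * Suc L choose Suc L"
  \<comment> \<open>The step reduces to \<open>4 (4L + 1) (L + 1)\<^sup>2 \<le> (4L + 5) (2L + 1)\<^sup>2\<close>, whose sides differ by 1.\<close>
  have rec: "Suc L * C' = 2 * (2 * L + 1) * C"
    unfolding C_def C'_def by (rule central_binomial_Suc)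
  have "(Suc L)\<^sup>2 * 16 ^ Suc L \<le> (Suc L)\<^sup>2 * 16 * ((4 * L + 1) * C\<^sup>2)"
    using Suc.IH unfolding C_def by simp
  also have "\<dots> \<le> (4 * Suc L + 1) * (2 * (2 * L + 1) * C)\<^sup>2"
    by (simp add: power2_eq_square algebra_simps)
  also have "\<dots> = (Suc L)\<^sup>2 * ((4 * Suc L + 1) * C'\<^sup>2)"
    unfolding rec[symmetric] by (simp only: power_mult_distrib mult_ac)
  finally show ?case
    unfolding C'_def by (simp only: mult_le_cancel1) simp
qed

lemma pmf_binomial_half_central_ge:
  "1 / sqrt (4 * real L + 1) \<le> pmf (binomial_pmf (2 * L) (1/2)) L"
proof -
  have "real (16 ^ L) \<le> real ((4 * L + 1) * (2 * L choose L)\<^sup>2)"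
    by (simp only: of_nat_le_iff central_binomial_sq_lower)
  then have "(4 ^ L)\<^sup>2 \<le> (4 * real L + 1) * real (2 * L choose L) ^ 2"
    by (simp add: algebra_simps power2_eq_square flip: power_mult_distrib)
  then have "4 ^ L \<le> sqrt (4 * real L + 1) * real (2 * L choose L)"
    by (metis real_le_rsqrt real_sqrt_mult real_sqrt_pow2 of_nat_0_le_iff power2_eq_square)
  moreover have "pmf (binomial_pmf (2 * L) (1/2)) L = real (2 * L choose L) / 4 ^ L"
    by (simp add: mult_2 power_add power_divide flip: power_mult_distrib)
  ultimately show ?thesis
    by (simp add: field_simps)
qed

lemma binomial_abs_dev_even_ge_sqrt: "sqrt (real M) / 2 \<le> binomial_abs_dev (2 * M)"
proof (cases "M = 0")
  case False
  have central: "1 / (2 * sqrt (real M)) \<le> pmf (binomial_pmf (2 * L) (1/2)) L" if "L < M" for L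
  proof -
    have "1 / (2 * sqrt (real M)) = 1 / sqrt (4 * real M)"
      by (simp add: real_sqrt_mult)
    also have "\<dots> \<le> 1 / sqrt (4 * real L + 1)"
      using that by (intro divide_left_mono real_sqrt_le_mono mult_pos_pos) auto
    finally show ?thesis
      using pmf_binomial_half_central_ge[of L] by linarith
  qed
  have "(\<Sum>L<M. 1 / (2 * sqrt (real M))) \<le> (\<Sum>L<M. pmf (binomial_pmf (2 * L) (1/2)) L)"
    by (rule sum_mono) (use central in auto)
  also have "\<dots> \<le> binomial_abs_dev (2 * M)"
    by (rule binomial_abs_dev_even_ge)
  moreover have "(\<Sum>L<M. 1 / (2 * sqrt (real M))) = sqrt (real M) / 2"
    using False by (simp add: field_simps)
  ultimately show ?thesis by simp
qed (simp add: binomial_abs_dev_def binomial_pmf_0)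

lemma expectation_binomial_half_excess:
  "measure_pmf.expectation (binomial_pmf K (1/2))
     (\<lambda>k. real (max k (K - k)) - real (if b then k else K - k)) = binomial_abs_dev K / 2"
proof -
  let ?c = "if b then -1/2 else 1/2 :: real"
  have "real (max k (K - k)) - real (if b then k else K - k) =
      \<bar>2 * real k - real K\<bar> / 2 + ?c * (2 * real k - real K)" if "k \<le> K" for k
    using that by (cases b; cases "K \<le> 2 * k") (auto simp: max_def of_nat_diff field_simps)
  then have "measure_pmf.expectation (binomial_pmf K (1/2))
        (\<lambda>k. real (max k (K - k)) - real (if b then k else K - k)) =
      measure_pmf.expectation (binomial_pmf K (1/2))
        (\<lambda>k. \<bar>2 * real k - real K\<bar> / 2 + ?c * (2 * real k - real K))"
    by (intro integral_cong_AE) (auto simp: AE_measure_pmf_iff)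
  also have "\<dots> = binomial_abs_dev K / 2 + ?c * measure_pmf.expectation (binomial_pmf K (1/2))
        (\<lambda>k. 2 * real k - real K)"
    unfolding binomial_abs_dev_def by (simp add: Bochner_Integration.integral_add del: integral_mult_right_zero)
  finally show ?thesis
    by (simp add: expectation_binomial_half_centered)
qed

definition clones :: "(nat \<Rightarrow> nat set) \<Rightarrow> nat \<Rightarrow> nat \<Rightarrow> bool" where
  "clones x k k' \<longleftrightarrow> (\<forall>i. i \<noteq> k \<longrightarrow> i \<noteq> k' \<longrightarrow> (k \<in> x i \<longleftrightarrow> k' \<in> x i))"

lemma indeg_clones:
  assumes "clones x k k'" "k \<notin> S" "k' \<notin> S"
  shows "indeg S x k = indeg S x k'"
proof -
  have "{i \<in> S. k \<in> x i} = {i \<in> S. k' \<in> x i}"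
    using assms unfolding clones_def by auto
  then show ?thesis
    unfolding indeg_def by simp
qed

lemma not_avd_beats_clone:
  assumes "clones x k k'" "k' \<noteq> k"
  shows "\<not> avd_beats N t x k k'"
  using assms indeg_clones[OF assms(1)] unfolding avd_beats_def by auto

lemma avd_eq_default_if_clones:
  assumes "\<forall>k\<in>N. \<exists>k'\<in>N. k' \<noteq> k \<and> clones x k k'"
  shows "avd N t x = t"
proof -
  have "\<not> (\<exists>k\<in>N. \<forall>j\<in>N - {k}. avd_beats N t x k j)"
    using assms not_avd_beats_clone by blast
  then show ?thesis
    unfolding avd_def by (rule if_not_P)
qed

lemma exists_nat_bits: "\<exists>c :: nat. c < 2 ^ m \<and> (\<forall>j<m. bit c j = v j)"
proof -
  define c :: nat where "c = horner_sum of_bool 2 (map v [0..<m])"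
  have "c = take_bit m c"
    unfolding c_def by (simp add: take_bit_horner_sum_bit_eq)
  then have "c < 2 ^ m"
    by (metis take_bit_nat_less_exp)
  moreover have "\<forall>j<m. bit c j = v j"
    unfolding c_def by (simp add: bit_horner_sum_bit_iff)
  ultimately show ?thesis by blast
qed

lemma card_blocks:
  fixes K :: nat
  shows "card {i \<in> {..<m * K}. P (i div K) i} = (\<Sum>j<m. card {i \<in> {j * K..<j * K + K}. P j i})"
proof -
  have "card {i \<in> {..<m * K}. P (i div K) i} = (\<Sum>i<m * K. of_bool (P (i div K) i))"
    by (simp add: sum.inter_filter[symmetric] Int_def)
  also have "\<dots> = (\<Sum>j<m. \<Sum>i\<in>{j * K..<j * K + K}. of_bool (P (i div K) i))"
    by (rule sum.nat_group[symmetric])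
  also have "\<dots> = (\<Sum>j<m. \<Sum>i\<in>{j * K..<j * K + K}. of_bool (P j i))"
  proof (intro sum.cong refl)
    fix j i assume "i \<in> {j * K..<j * K + K}"
    then have "i div K = j"
      by (auto intro: div_nat_eqI simp: mult.commute)
    then show "of_bool (P (i div K) i) = (of_bool (P j i) :: nat)" by simp
  qed
  also have "\<dots> = (\<Sum>j<m. card {i \<in> {j * K..<j * K + K}. P j i})"
    by (simp add: sum.inter_filter[symmetric] Int_def)
  finally show ?thesis .
qed

definition poll_ballot :: "nat \<Rightarrow> nat \<Rightarrow> nat \<Rightarrow> nat \<Rightarrow> bool \<Rightarrow> nat set" where
  "poll_ballot h m K i b =
     (if i < m * K then {a \<in> {0..<2 * h}. a mod h < 2 ^ m \<and> bit (a mod h) (i div K) = b} - {i} else {})"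

definition poll_profile :: "nat \<Rightarrow> nat \<Rightarrow> nat \<Rightarrow> (nat \<Rightarrow> bool) \<Rightarrow> nat \<Rightarrow> nat set" where
  "poll_profile h m K r i = (if i < 2 * h then poll_ballot h m K i (r i) else {})"

definition block_count :: "(nat \<Rightarrow> bool) \<Rightarrow> nat \<Rightarrow> nat \<Rightarrow> bool \<Rightarrow> nat" where
  "block_count r K j b = card {i \<in> {j * K..<j * K + K}. r i = b}"

lemma mem_poll_profile:
  "a \<in> poll_profile h m K r i \<longleftrightarrow>
     i < 2 * h \<and> i < m * K \<and> a < 2 * h \<and> a \<noteq> i \<and> a mod h < 2 ^ m \<and> bit (a mod h) (i div K) = r i"
  unfolding poll_profile_def poll_ballot_def by auto

lemma poll_profile_clones:
  assumes "k < 2 * h"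
  shows "\<exists>k'\<in>{0..<2 * h}. k' \<noteq> k \<and> clones (poll_profile h m K r) k k'"
proof -
  define k' where "k' = (if k < h then k + h else k - h)"
  have "k' < 2 * h" "k' \<noteq> k" "k' mod h = k mod h"
    using assms unfolding k'_def by (auto simp: le_mod_geq)
  with assms show ?thesis
    unfolding clones_def mem_poll_profile by (intro bexI[of _ k']) simp_all
qed

lemma avd_poll_profile:
  assumes "t < 2 * h"
  shows "avd {0..<2 * h} t (poll_profile h m K r) = t"
  using poll_profile_clones by (intro avd_eq_default_if_clones) auto

lemma deg_poll_profile_le:
  "deg {0..<2 * h} (poll_profile h m K r) a \<le> (\<Sum>j<m. block_count r K j (bit (a mod h) j))"
proof -
  have "deg {0..<2 * h} (poll_profile h m K r) a \<le> card {i \<in> {..<m * K}. r i = bit (a mod h) (i div K)}"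
    unfolding deg_def indeg_def by (rule card_mono) (auto simp: mem_poll_profile)
  also have "\<dots> = (\<Sum>j<m. block_count r K j (bit (a mod h) j))"
    unfolding block_count_def by (rule card_blocks)
  finally show ?thesis .
qed

lemma deg_poll_profile_ge:
  assumes "m * K \<le> 2 * h" "a < 2 * h" "a mod h < 2 ^ m"
  shows "(\<Sum>j<m. block_count r K j (bit (a mod h) j)) \<le> deg {0..<2 * h} (poll_profile h m K r) a + 1"
proof -
  let ?V = "{i \<in> {..<m * K}. r i = bit (a mod h) (i div K)}"
  have "(\<Sum>j<m. block_count r K j (bit (a mod h) j)) = card ?V"
    unfolding block_count_def by (rule card_blocks[symmetric])
  also have "card ?V \<le> card (?V - {a}) + 1"
    by (cases "a \<in> ?V") (auto simp: card_Suc_Diff1)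
  also have "card (?V - {a}) \<le> deg {0..<2 * h} (poll_profile h m K r) a"
    unfolding deg_def indeg_def using assms by (intro card_mono) (auto simp: mem_poll_profile)
  finally show ?thesis by simp
qed

lemma maxdeg_poll_profile_ge:
  assumes "m * K \<le> 2 * h" "2 ^ m \<le> h"
  shows "(\<Sum>j<m. max (block_count r K j True) (block_count r K j False))
           \<le> maxdeg {0..<2 * h} (poll_profile h m K r) + 1"
proof -
  obtain c :: nat where c: "c < 2 ^ m"
    and bits: "\<forall>j<m. bit c j = (block_count r K j False \<le> block_count r K j True)"
    using exists_nat_bits[of m "\<lambda>j. block_count r K j False \<le> block_count r K j True"] by blast
  have c_agent: "c < 2 * h" and c_code: "c mod h = c"
    using c assms(2) by auto
  have "(\<Sum>j<m. max (block_count r K j True) (block_count r K j False))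
      = (\<Sum>j<m. block_count r K j (bit (c mod h) j))"
    unfolding c_code using bits by (intro sum.cong) (auto simp: max_def)
  also have "\<dots> \<le> deg {0..<2 * h} (poll_profile h m K r) c + 1"
    using c c_code by (intro deg_poll_profile_ge[OF assms(1) c_agent]) simp
  also have "deg {0..<2 * h} (poll_profile h m K r) c \<le> maxdeg {0..<2 * h} (poll_profile h m K r)"
    unfolding maxdeg_def using c_agent by (intro Max_ge) auto
  finally show ?thesis by simp
qed

lemma approx_gap_poll_profile:
  assumes "m * K \<le> 2 * h" "2 ^ m \<le> h"
  shows "(\<Sum>j<m. real (max (block_count r K j True) (block_count r K j False))
                    - real (block_count r K j (bit (t mod h) j))) - 1
           \<le> real (maxdeg {0..<2 * h} (poll_profile h m K r)) - real (deg {0..<2 * h} (poll_profile h m K r) t)"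
proof -
  have "real (\<Sum>j<m. max (block_count r K j True) (block_count r K j False))
      \<le> real (maxdeg {0..<2 * h} (poll_profile h m K r) + 1)"
    using maxdeg_poll_profile_ge[OF assms, of r] by (rule of_nat_mono)
  moreover have "real (deg {0..<2 * h} (poll_profile h m K r) t)
      \<le> real (\<Sum>j<m. block_count r K j (bit (t mod h) j))"
    using deg_poll_profile_le by (rule of_nat_mono)
  ultimately show ?thesis
    unfolding of_nat_sum sum_subtractf by simp
qed

lemma Pi_pmf_map_dependent:
  assumes "finite A"
  shows "Pi_pmf A d (\<lambda>i. map_pmf (f i) p) =
           map_pmf (\<lambda>r i. if i \<in> A then f i (r i) else d) (Pi_pmf A d' (\<lambda>_. p))"
proof -
  have "Pi_pmf A d (\<lambda>i. map_pmf (f i) p) = Pi_pmf A d (\<lambda>i. bind_pmf p (\<lambda>b. return_pmf (f i b)))"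
    by (simp add: map_pmf_def)
  also have "\<dots> = bind_pmf (Pi_pmf A d' (\<lambda>_. p)) (\<lambda>r. Pi_pmf A d (\<lambda>i. return_pmf (f i (r i))))"
    using assms by (rule Pi_pmf_bind)
  also have "\<dots> = map_pmf (\<lambda>r i. if i \<in> A then f i (r i) else d) (Pi_pmf A d' (\<lambda>_. p))"
    using assms by (simp add: map_pmf_def)
  finally show ?thesis .
qed

definition fair_coins :: "nat set \<Rightarrow> (nat \<Rightarrow> bool) pmf" where
  "fair_coins A = Pi_pmf A False (\<lambda>_. bernoulli_pmf (1/2))"

lemma integrable_fair_coins:
  fixes f :: "(nat \<Rightarrow> bool) \<Rightarrow> real"
  assumes "finite A"
  shows "integrable (measure_pmf (fair_coins A)) f"
proof (rule integrable_measure_pmf_finite)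
  have "set_pmf (fair_coins A) \<subseteq> PiE_dflt A False (set_pmf \<circ> (\<lambda>_. bernoulli_pmf (1/2)))"
    unfolding fair_coins_def by (rule set_Pi_pmf_subset'[OF assms])
  moreover have "finite (PiE_dflt A False (set_pmf \<circ> (\<lambda>_. bernoulli_pmf (1/2))))"
    using assms by (intro finite_PiE_dflt) auto
  ultimately show "finite (set_pmf (fair_coins A))"
    by (rule finite_subset)
qed

definition poll_instance :: "nat \<Rightarrow> nat \<Rightarrow> nat \<Rightarrow> nat \<Rightarrow> nat set pmf" where
  "poll_instance h m K i = map_pmf (poll_ballot h m K i) (bernoulli_pmf (1/2))"

lemma profile_pmf_poll_instance:
  "profile_pmf {0..<2 * h} (poll_instance h m K) = map_pmf (poll_profile h m K) (fair_coins {0..<2 * h})"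
  unfolding profile_pmf_def poll_instance_def fair_coins_def
  by (simp add: Pi_pmf_map_dependent[where d'=False] poll_profile_def[abs_def])

lemma block_count_False: "block_count r K j False = K - block_count r K j True"
proof -
  have "{i \<in> {j * K..<j * K + K}. r i = False} = {j * K..<j * K + K} - {i \<in> {j * K..<j * K + K}. r i}"
    by auto
  also have "card \<dots> = K - card {i \<in> {j * K..<j * K + K}. r i}"
    by (subst card_Diff_subset) auto
  finally show ?thesis
    unfolding block_count_def by simp
qed

lemma block_count_binomial:
  assumes "finite A" "{j * K..<j * K + K} \<subseteq> A"
  shows "map_pmf (\<lambda>r. block_count r K j True) (fair_coins A) = binomial_pmf K (1/2)"
proof -
  let ?G = "{j * K..<j * K + K}"
  have "binomial_pmf K (1/2) = map_pmf (\<lambda>r. card {i \<in> ?G. r i}) (Pi_pmf ?G False (\<lambda>_. bernoulli_pmf (1/2)))"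
    by (rule binomial_pmf_altdef') auto
  also have "Pi_pmf ?G False (\<lambda>_. bernoulli_pmf (1/2)) =
      map_pmf (\<lambda>r i. if i \<in> ?G then r i else False) (fair_coins A)"
    unfolding fair_coins_def using assms by (rule Pi_pmf_subset)
  finally show ?thesis
    unfolding block_count_def pmf.map_comp o_def by (auto intro: pmf.map_cong arg_cong[where f=card])
qed

lemma expectation_block_excess:
  assumes "finite A" "{j * K..<j * K + K} \<subseteq> A"
  shows "measure_pmf.expectation (fair_coins A)
           (\<lambda>r. real (max (block_count r K j True) (block_count r K j False)) - real (block_count r K j b))
         = binomial_abs_dev K / 2"
proof -
  define g where "g k = real (max k (K - k)) - real (if b then k else K - k)" for k
  have "measure_pmf.expectation (fair_coins A)
           (\<lambda>r. real (max (block_count r K j True) (block_count r K j False)) - real (block_count r K j b))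
      = measure_pmf.expectation (map_pmf (\<lambda>r. block_count r K j True) (fair_coins A)) g"
    unfolding g_def by (cases b) (simp_all add: block_count_False)
  also have "\<dots> = binomial_abs_dev K / 2"
    unfolding block_count_binomial[OF assms] g_def by (rule expectation_binomial_half_excess)
  finally show ?thesis .
qed

lemma avd_additive_approx_poll_instance:
  assumes "m * K \<le> 2 * h" "2 ^ m \<le> h" "t < 2 * h"
  shows "real m * binomial_abs_dev K / 2 - 1 \<le> avd_additive_approx {0..<2 * h} t (poll_instance h m K)"
proof -
  let ?N = "{0..<2 * h}"
  let ?excess = "\<lambda>r j. real (max (block_count r K j True) (block_count r K j False))
                        - real (block_count r K j (bit (t mod h) j))"
  have block: "{j * K..<j * K + K} \<subseteq> ?N" if "j < m" for j
  proof -
    have "j * K + K \<le> m * K"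
      using that by (metis add.commute mult_Suc mult_le_mono1 Suc_leI)
    then show ?thesis using assms(1) by auto
  qed
  have excess: "measure_pmf.expectation (fair_coins ?N) (\<lambda>r. ?excess r j) = binomial_abs_dev K / 2"
    if "j < m" for j
    using expectation_block_excess[OF _ block[OF that]] by simp
  have "real m * binomial_abs_dev K / 2 - 1 = (\<Sum>j<m. measure_pmf.expectation (fair_coins ?N) (\<lambda>r. ?excess r j)) - 1"
    by (simp add: excess)
  also have "\<dots> = measure_pmf.expectation (fair_coins ?N) (\<lambda>r. (\<Sum>j<m. ?excess r j) - 1)"
    by (simp add: integrable_fair_coins Bochner_Integration.integral_sum)
  also have "\<dots> \<le> measure_pmf.expectation (fair_coins ?N)
      (\<lambda>r. real (maxdeg ?N (poll_profile h m K r)) - real (deg ?N (poll_profile h m K r) t))"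
    by (intro integral_mono integrable_fair_coins approx_gap_poll_profile assms(1,2)) simp_all
  also have "\<dots> = avd_additive_approx ?N t (poll_instance h m K)"
    unfolding avd_additive_approx_def profile_pmf_poll_instance integral_map_pmf avd_poll_profile[OF assms(3)] ..
  finally show ?thesis .
qed

lemma sqrt_n_ln_n_le:
  fixes n m :: nat
  assumes "1 \<le> n" "2 ^ m \<le> n + 1" "n + 1 < 2 ^ (m + 1)"
  shows "sqrt (real n * ln (real n)) \<le> 2 * real m * sqrt (real ((n + 1) div m))"
proof -
  define M where "M = (n + 1) div m"
  have "m < n + 1"
    using less_exp[of m] assms(2) by linarith
  moreover have "1 \<le> m"
    using assms(1,3) by (cases m) auto
  ultimately have "1 \<le> M"
    unfolding M_def by (simp add: Suc_le_eq div_greater_zero_iff)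
  have "n + 1 = m * M + (n + 1) mod m" "(n + 1) mod m < m"
    using \<open>1 \<le> m\<close> unfolding M_def by simp_all
  moreover have "m \<le> m * M"
    using \<open>1 \<le> M\<close> by simp
  ultimately have "n \<le> 2 * m * M"
    by linarith
  then have size: "real n \<le> 2 * real m * real M"
    by (metis of_nat_le_iff of_nat_mult of_nat_numeral)
  have "real n < 2 ^ (m + 1)"
    using assms(3) by (subst of_nat_less_numeral_power_cancel_iff) linarith
  then have "ln (real n) < ln (2 ^ (m + 1))"
    using assms(1) by (intro ln_less_cancel_iff[THEN iffD2]) auto
  also have "\<dots> = real (m + 1) * ln 2"
    by (rule ln_realpow)
  also have "\<dots> \<le> real (m + 1)"
    using ln_2_less_1 by (intro mult_left_le) auto
  finally have log: "ln (real n) \<le> 2 * real m"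
    using \<open>1 \<le> m\<close> by simp
  have "real n * ln (real n) \<le> (2 * real m * real M) * (2 * real m)"
    using size log assms(1) by (intro mult_mono) auto
  also have "\<dots> = (2 * real m * sqrt (real M))\<^sup>2"
    by (simp add: power_mult_distrib power2_eq_square)
  finally show ?thesis
    unfolding M_def by (simp add: real_le_lsqrt real_sqrt_le_iff)
qed

lemma sqrt_n_ln_n_ge_16:
  assumes "81 \<le> n"
  shows "16 \<le> sqrt (real n * ln (real n))"
proof -
  have "exp (4 :: real) = exp 1 ^ 4"
    using exp_of_nat_mult[of 4 "1 :: real"] by simp
  also have "\<dots> \<le> 3 ^ 4"
    by (rule power_mono[OF exp_le]) simp
  finally have "exp 4 \<le> real n"
    using assms by simp
  then have "4 \<le> ln (real n)"
    using assms by (subst ln_ge_iff) auto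
  then have "81 * 4 \<le> real n * ln (real n)"
    using assms by (intro mult_mono) auto
  then show ?thesis
    by (intro real_le_rsqrt) simp
qed

theorem mainTheorem18:
  shows "\<exists>c>0. \<exists>n0::nat. \<forall>n\<ge>n0.
           \<exists>P. opinion_poll {0..<2*(n+1)} P \<and>
             (\<forall>t\<in>{0..<2*(n+1)}.
                avd_additive_approx {0..<2*(n+1)} t P \<ge> c * sqrt (real n * ln (real n)))"
proof (intro exI[of _ "1/16"] conjI exI[of _ "81::nat"] allI impI)
  fix n :: nat
  assume n: "81 \<le> n"
  obtain m where m: "2 ^ m \<le> n + 1" "n + 1 < 2 ^ (m + 1)"
    using ex_power_ivl1[of 2 "n + 1"] by auto
  define M where "M = (n + 1) div m"
  let ?S = "sqrt (real n * ln (real n))"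
  have "M * m \<le> n + 1"
    unfolding M_def by (rule div_times_less_eq_dividend)
  then have blocks: "m * (2 * M) \<le> 2 * (n + 1)"
    by (simp add: algebra_simps)
  have "opinion_poll {0..<2*(n+1)} (poll_instance (n + 1) m (2 * M))"
    unfolding opinion_poll_def poll_instance_def poll_ballot_def by auto
  moreover have "1/16 * ?S \<le> avd_additive_approx {0..<2*(n+1)} t (poll_instance (n + 1) m (2 * M))"
    if "t \<in> {0..<2*(n+1)}" for t
  proof -
    have "?S \<le> 2 * real m * sqrt (real M)"
      unfolding M_def using n by (intro sqrt_n_ln_n_le m) simp
    also have "\<dots> \<le> 4 * (real m * binomial_abs_dev (2 * M))"
      using binomial_abs_dev_even_ge_sqrt[of M]
        mult_left_mono[of "sqrt (real M)" "2 * binomial_abs_dev (2 * M)" "2 * real m"] by simp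
    finally have "1/16 * ?S \<le> real m * binomial_abs_dev (2 * M) / 2 - 1"
      using sqrt_n_ln_n_ge_16[OF n] by simp
    also have "\<dots> \<le> avd_additive_approx {0..<2*(n+1)} t (poll_instance (n + 1) m (2 * M))"
      using that m(1) blocks by (intro avd_additive_approx_poll_instance) simp_all
    finally show ?thesis .
  qed
  ultimately show "\<exists>P. opinion_poll {0..<2*(n+1)} P \<and>
      (\<forall>t\<in>{0..<2*(n+1)}. avd_additive_approx {0..<2*(n+1)} t P \<ge> 1/16 * ?S)"
    by blast
qed simp

end
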